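(* Let $p,q$ be two distinct prime numbers and $l$ a positive integer. Then $\dfrac{1}{p}\in\mathbb{Q}\text{-}\mathcal{KS}(q^{l})$ if and only if $\dfrac{1}{q}\in\mathbb{Q}\text{-}\mathcal{KS}(p^{l})$.
   Context: Every nonzero rational $\alpha$ is written $\alpha=\alpha_1/\alpha_2$ with $\alpha_1\in\mathbb{Z}$, $\alpha_2$ a positive integer and $\gcd(\alpha_1,\alpha_2)=1$. For an integer $N\ge 2$ and a nonzero rational $\alpha=\alpha_1/\alpha_2$, $N$ is called an $\alpha$-Korselt number if $N\neq\alpha$ and $\alpha_2r-\alpha_1$ divides $\alpha_2N-\alpha_1$ (in $\mathbb{Z}$) for every prime divisor $r$ of $N$. $\mathbb{Q}\text{-}\mathcal{KS}(N)$ is the set of all $\beta\in\mathbb{Q}\setminus\{0,N\}$ such that $N$ is a $\beta$-Korselt number. *)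

theory Defs
  imports Complex_Main "HOL-Computational_Algebra.Primes"
begin

definition korselt :: "rat \<Rightarrow> nat \<Rightarrow> bool" where
  "korselt \<alpha> N \<longleftrightarrow> N \<ge> 2 \<and> \<alpha> \<noteq> 0 \<and> of_nat N \<noteq> \<alpha> \<and>
     (\<forall>r. prime r \<and> r dvd N \<longrightarrow>
        (snd (quotient_of \<alpha>) * int r - fst (quotient_of \<alpha>)) dvd
        (snd (quotient_of \<alpha>) * int N - fst (quotient_of \<alpha>)))"

definition QKS :: "nat \<Rightarrow> rat set" where
  "QKS N = {\<beta>. \<beta> \<noteq> 0 \<and> \<beta> \<noteq> of_nat N \<and> korselt \<beta> N}"

end

theory Submission
  imports Defs
begin

text \<open>For \<open>\<alpha> = 1/p\<close> and \<open>N = q^l\<close> the only prime divisor of \<open>N\<close> is \<open>q\<close>, so the Korselt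
  condition reads \<open>pq - 1 | p q^l - 1\<close>. Modulo \<open>pq - 1\<close> we have \<open>pq = 1\<close>, so \<open>p q^l = q^(l-1)\<close>
  and the condition says \<open>q^(l-1) = 1\<close>; since \<open>(pq)^(l-1) = 1\<close> this is equivalent to
  \<open>p^(l-1) = 1\<close>, the same condition with \<open>p\<close> and \<open>q\<close> exchanged.\<close>

lemma mult_power_minus_one_dvd_iff:
  fixes a b :: "'a::comm_ring_1"
  shows "(a * b - 1) dvd (a * b ^ Suc k - 1) \<longleftrightarrow> (a * b - 1) dvd (b ^ k - 1)"
proof -
  have "a * b ^ Suc k - 1 = b ^ k * (a * b - 1) + (b ^ k - 1)"
    by (simp add: algebra_simps)
  then show ?thesis
    by (metis dvd_add_right_iff dvd_triv_right)
qed

lemma power_minus_one_dvd_iff_swap: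
  fixes a b :: "'a::comm_ring_1"
  shows "(a * b - 1) dvd (b ^ k - 1) \<longleftrightarrow> (a * b - 1) dvd (a ^ k - 1)"
proof -
  have ab_pow: "(a * b - 1) dvd ((a * b) ^ k - 1)"
    by (simp add: power_diff_1_eq)
  have "(a * b) ^ k - 1 = a ^ k * (b ^ k - 1) + (a ^ k - 1)"
    and "(a * b) ^ k - 1 = b ^ k * (a ^ k - 1) + (b ^ k - 1)"
    by (simp_all add: power_mult_distrib algebra_simps)
  then show ?thesis
    using ab_pow by (metis dvd_add_right_iff dvd_mult)
qed

lemma mult_power_minus_one_dvd_swap:
  fixes a b :: "'a::comm_ring_1"
  shows "(a * b - 1) dvd (a * b ^ Suc k - 1) \<longleftrightarrow> (a * b - 1) dvd (b * a ^ Suc k - 1)"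
  using mult_power_minus_one_dvd_iff[of a b k] mult_power_minus_one_dvd_iff[of b a k]
    power_minus_one_dvd_iff_swap[of a b k]
  by (simp add: mult.commute)

lemma quotient_of_one_div_of_nat:
  assumes "n > 0"
  shows "quotient_of (1 / of_nat n) = (1, int n)"
proof -
  have "(1 / of_nat n :: rat) = Fract 1 (int n)"
    by (simp add: Fract_of_int_quotient)
  then show ?thesis
    using assms by (simp add: quotient_of_Fract normalize_def)
qed

lemma prime_dvd_prime_power_iff:
  fixes q r :: nat
  assumes "prime q" "prime r" "l > 0"
  shows "r dvd q ^ l \<longleftrightarrow> r = q"
  using assms prime_dvd_power_iff[of r l q] primes_dvd_imp_eq[of r q] dvd_power[of l q] by auto

lemma korselt_prime_power_iff:
  fixes q l :: nat and \<alpha> :: rat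
  assumes "prime q" "l > 0"
  defines "a\<^sub>1 \<equiv> fst (quotient_of \<alpha>)" and "a\<^sub>2 \<equiv> snd (quotient_of \<alpha>)"
  shows "korselt \<alpha> (q ^ l) \<longleftrightarrow>
    \<alpha> \<noteq> 0 \<and> of_nat (q ^ l) \<noteq> \<alpha> \<and> (a\<^sub>2 * int q - a\<^sub>1) dvd (a\<^sub>2 * int (q ^ l) - a\<^sub>1)"
proof -
  have "q ^ l \<ge> 2"
    using assms prime_ge_2_nat[of q] self_le_power[of q l] by linarith
  then show ?thesis
    using assms prime_dvd_prime_power_iff[of q _ l]
    unfolding korselt_def a\<^sub>1_def a\<^sub>2_def by blast
qed

lemma one_div_in_QKS_prime_power_iff:
  fixes p q l :: nat
  assumes "p > 0" "prime q" "l > 0"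
  shows "(1 / of_nat p :: rat) \<in> QKS (q ^ l) \<longleftrightarrow> (int p * int q - 1) dvd (int p * int q ^ l - 1)"
proof -
  have "(1 / of_nat p :: rat) \<le> 1"
    using assms(1) by simp
  moreover have "2 \<le> q ^ l"
    using assms prime_ge_2_nat[of q] self_le_power[of q l] by linarith
  then have "(2 :: rat) \<le> of_nat (q ^ l)"
    by (metis of_nat_le_iff of_nat_numeral)
  ultimately have "(1 / of_nat p :: rat) \<noteq> of_nat (q ^ l)"
    by linarith
  then show ?thesis
    using assms korselt_prime_power_iff[of q l "1 / of_nat p"] quotient_of_one_div_of_nat[of p]
    unfolding QKS_def by auto
qed

theorem proposition5p3:
  fixes p q l :: nat
  assumes "prime p" and "prime q" and "p \<noteq> q" and "l > 0"
  shows "(1 / of_nat p :: rat) \<in> QKS (q ^ l) \<longleftrightarrow> (1 / of_nat q :: rat) \<in> QKS (p ^ l)"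
proof -
  obtain k where l: "l = Suc k"
    using assms(4) gr0_implies_Suc by blast
  have "(1 / of_nat p :: rat) \<in> QKS (q ^ l) \<longleftrightarrow> (int p * int q - 1) dvd (int p * int q ^ l - 1)"
    using assms one_div_in_QKS_prime_power_iff prime_gt_0_nat by blast
  also have "\<dots> \<longleftrightarrow> (int q * int p - 1) dvd (int q * int p ^ l - 1)"
    using mult_power_minus_one_dvd_swap[of "int p" "int q" k] unfolding l
    by (simp add: mult.commute)
  also have "\<dots> \<longleftrightarrow> (1 / of_nat q :: rat) \<in> QKS (p ^ l)"
    using assms one_div_in_QKS_prime_power_iff prime_gt_0_nat by blast
  finally show ?thesis .
qed

end
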